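(* Let $G$ be a finite connected simple graph that has no spanning tree with at most $4$ leaves, and let $T$ be a maximal tree of $G$ with $5$ leaves (i.e., a subtree of $G$ with exactly $5$ leaves whose number of vertices is maximum among all subtrees of $G$ with exactly $5$ leaves). Then there is no tree $T'$ in $G$ such that $T'$ has at most $4$ leaves and $V(T')=V(T)$.
   Context: A leaf of a tree is a vertex of degree one in the tree. A tree in $G$ means a subgraph of $G$ that is a tree. *)

theory Defs
  imports Main
begin

definition simple_graph :: "'a set \<Rightarrow> 'a set set \<Rightarrow> bool" where
  "simple_graph V E \<longleftrightarrow> finite V \<and>
     (\<forall>e\<in>E. \<exists>u v. u \<noteq> v \<and> u \<in> V \<and> v \<in> V \<and> e = {u, v})"

definition adj_rel :: "'a set set \<Rightarrow> ('a \<times> 'a) set" where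
  "adj_rel E = {(u, v). {u, v} \<in> E}"

definition graph_connected :: "'a set \<Rightarrow> 'a set set \<Rightarrow> bool" where
  "graph_connected V E \<longleftrightarrow> V \<noteq> {} \<and> (\<forall>u\<in>V. \<forall>v\<in>V. (u, v) \<in> (adj_rel E)\<^sup>*)"

definition is_cycle :: "'a set set \<Rightarrow> 'a list \<Rightarrow> bool" where
  "is_cycle E cs \<longleftrightarrow> length cs \<ge> 3 \<and> distinct cs \<and>
     (\<forall>i < length cs - 1. {cs ! i, cs ! Suc i} \<in> E) \<and> {last cs, hd cs} \<in> E"

definition acyclic_graph :: "'a set \<Rightarrow> 'a set set \<Rightarrow> bool" where
  "acyclic_graph V E \<longleftrightarrow> \<not> (\<exists>cs. set cs \<subseteq> V \<and> is_cycle E cs)"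

definition is_tree :: "'a set \<Rightarrow> 'a set set \<Rightarrow> bool" where
  "is_tree V E \<longleftrightarrow> simple_graph V E \<and> graph_connected V E \<and> acyclic_graph V E"

definition subgraph :: "'a set \<Rightarrow> 'a set set \<Rightarrow> 'a set \<Rightarrow> 'a set set \<Rightarrow> bool" where
  "subgraph H F V E \<longleftrightarrow> H \<subseteq> V \<and> F \<subseteq> E \<and> (\<forall>e\<in>F. e \<subseteq> H)"

definition tree_in :: "'a set \<Rightarrow> 'a set set \<Rightarrow> 'a set \<Rightarrow> 'a set set \<Rightarrow> bool" where
  "tree_in H F V E \<longleftrightarrow> subgraph H F V E \<and> is_tree H F"

definition degree :: "'a set set \<Rightarrow> 'a \<Rightarrow> nat" where
  "degree E v = card {e\<in>E. v \<in> e}"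

definition leaves :: "'a set \<Rightarrow> 'a set set \<Rightarrow> 'a set" where
  "leaves V E = {v\<in>V. degree E v = 1}"

definition spanning_tree :: "'a set set \<Rightarrow> 'a set \<Rightarrow> 'a set set \<Rightarrow> bool" where
  "spanning_tree F V E \<longleftrightarrow> tree_in V F V E"

definition maximal_tree_with_leaves ::
  "nat \<Rightarrow> 'a set \<Rightarrow> 'a set set \<Rightarrow> 'a set \<Rightarrow> 'a set set \<Rightarrow> bool" where
  "maximal_tree_with_leaves k H F V E \<longleftrightarrow> tree_in H F V E \<and> card (leaves H F) = k \<and>
     (\<forall>H' F'. tree_in H' F' V E \<and> card (leaves H' F') = k \<longrightarrow> card H' \<le> card H)"

end

theory Submission
  imports Defs
begin

(* Attaching a pendant edge to a tree adds at most one leaf. So a tree with at most four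
   leaves on V(T) can be grown edge by edge inside the connected graph G; it never becomes
   spanning, hence at some point it has exactly five leaves, and then it is a tree with five
   leaves on strictly more vertices than T, contradicting the maximality of T. *)

lemma simple_graph_finite_edges:
  assumes "simple_graph V E"
  shows "finite E"
proof -
  have "E \<subseteq> Pow V" and "finite V"
    using assms unfolding simple_graph_def by auto
  then show ?thesis
    by (meson finite_Pow_iff rev_finite_subset)
qed

lemma simple_graph_edge_subset:
  assumes "simple_graph V E" and "e \<in> E"
  shows "e \<subseteq> V"
  using assms unfolding simple_graph_def by auto

lemma rtrancl_exit_step:
  assumes "(x, y) \<in> R\<^sup>*" "x \<in> S" "y \<notin> S"
  obtains a b where "(a, b) \<in> R" "a \<in> S" "b \<notin> S"
  using assms by (induction rule: rtrancl_induct) blast+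

lemma is_cycle_edge_mod:
  assumes "is_cycle E cs" and "i < length cs"
  shows "{cs ! i, cs ! (Suc i mod length cs)} \<in> E"
proof (cases "Suc i < length cs")
  case True
  then show ?thesis
    using assms(1) unfolding is_cycle_def by auto
next
  case False
  then have "Suc i = length cs"
    using assms(2) by simp
  then have "cs ! i = last cs" and "Suc i mod length cs = 0"
    by (metis diff_Suc_1 last_conv_nth list.size(3) nat.distinct(1), simp)
  moreover have "cs ! 0 = hd cs"
    using assms(2) by (intro hd_conv_nth[symmetric]) auto
  ultimately show ?thesis
    using assms(1) unfolding is_cycle_def by simp
qed

lemma is_cycle_two_neighbours:
  assumes "is_cycle E cs" and "w \<in> set cs"
  obtains a b where "a \<noteq> b" "a \<noteq> w" "b \<noteq> w" "{w, a} \<in> E" "{w, b} \<in> E"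
proof -
  define n where "n = length cs"
  have n: "n \<ge> 3" and dist: "distinct cs"
    using assms(1) unfolding is_cycle_def n_def by auto
  obtain i where i: "i < n" "cs ! i = w"
    using assms(2) by (metis in_set_conv_nth n_def)
  define s where "s = Suc i mod n"
  define p where "p = (i + n - 1) mod n"
  have "Suc p mod n = i"
    using i n unfolding p_def by (simp add: mod_Suc_eq)
  have "p < n"
    using n unfolding p_def by simp
  have "{w, cs ! s} \<in> E"
    using is_cycle_edge_mod[OF assms(1)] i unfolding s_def n_def by blast
  moreover have "{cs ! p, w} \<in> E"
    using is_cycle_edge_mod[OF assms(1) \<open>p < n\<close>[unfolded n_def]] \<open>Suc p mod n = i\<close> i
    unfolding n_def by simp
  moreover have "s \<noteq> p" "s \<noteq> i" "p \<noteq> i" "s < n"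
    using i n unfolding s_def p_def by (auto simp: mod_if)
  ultimately show ?thesis
    using that[of "cs ! s" "cs ! p"] \<open>p < n\<close> i dist nth_eq_iff_index_eq
    by (metis insert_commute n_def)
qed

lemma is_cycle_remove_edge:
  assumes "is_cycle (insert e F) cs" and "\<not> e \<subseteq> set cs"
  shows "is_cycle F cs"
proof -
  have "{cs ! i, cs ! Suc i} \<subseteq> set cs" if "i < length cs - 1" for i
    using that by auto
  moreover have "{last cs, hd cs} \<subseteq> set cs"
    using assms(1) unfolding is_cycle_def by (auto intro: last_in_set hd_in_set)
  ultimately show ?thesis
    using assms unfolding is_cycle_def by blast
qed

lemma acyclic_graph_insert_pendant:
  assumes "acyclic_graph H F" and "\<forall>e\<in>F. e \<subseteq> H" and "w \<notin> H"
  shows "acyclic_graph (insert w H) (insert {u, w} F)"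
  unfolding acyclic_graph_def
proof
  assume "\<exists>cs. set cs \<subseteq> insert w H \<and> is_cycle (insert {u, w} F) cs"
  then obtain cs where cs: "set cs \<subseteq> insert w H" "is_cycle (insert {u, w} F) cs"
    by blast
  show False
  proof (cases "w \<in> set cs")
    case True
    have only_u: "x = u" if "{w, x} \<in> insert {u, w} F" "x \<noteq> w" for x
      using that assms(2,3) by (auto simp: doubleton_eq_iff)
    obtain a b where "a \<noteq> b" "a \<noteq> w" "b \<noteq> w"
      "{w, a} \<in> insert {u, w} F" "{w, b} \<in> insert {u, w} F"
      using is_cycle_two_neighbours[OF cs(2) True] .
    then show False
      using only_u by blast
  next
    case False
    then have "is_cycle F cs"
      using is_cycle_remove_edge[OF cs(2)] by blast
    moreover have "set cs \<subseteq> H"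
      using cs(1) False by blast
    ultimately show False
      using assms(1) unfolding acyclic_graph_def by blast
  qed
qed

lemma graph_connected_insert_pendant:
  assumes "graph_connected H F" and "u \<in> H"
  shows "graph_connected (insert w H) (insert {u, w} F)"
proof -
  let ?R = "(adj_rel (insert {u, w} F))\<^sup>*"
  have mono: "(adj_rel F)\<^sup>* \<subseteq> ?R"
    by (rule rtrancl_mono) (auto simp: adj_rel_def)
  have from_u: "(u, a) \<in> ?R" and to_u: "(a, u) \<in> ?R" if "a \<in> insert w H" for a
  proof -
    have "(u, w) \<in> adj_rel (insert {u, w} F)" "(w, u) \<in> adj_rel (insert {u, w} F)"
      by (auto simp: adj_rel_def insert_commute)
    moreover have "(u, a) \<in> ?R \<and> (a, u) \<in> ?R" if "a \<in> H"
      using that assms mono unfolding graph_connected_def by blast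
    ultimately show "(u, a) \<in> ?R" "(a, u) \<in> ?R"
      using \<open>a \<in> insert w H\<close> by auto
  qed
  show ?thesis
    unfolding graph_connected_def using from_u to_u by (blast intro: rtrancl_trans)
qed

lemma tree_in_insert_pendant:
  assumes "tree_in H F V E" and "w \<in> V" "w \<notin> H" "u \<in> H" "{u, w} \<in> E"
  shows "tree_in (insert w H) (insert {u, w} F) V E"
proof -
  have sub: "H \<subseteq> V" "F \<subseteq> E" "\<forall>e\<in>F. e \<subseteq> H"
    using assms(1) unfolding tree_in_def subgraph_def by auto
  have tree: "simple_graph H F" "graph_connected H F" "acyclic_graph H F"
    using assms(1) unfolding tree_in_def is_tree_def by auto
  have "subgraph (insert w H) (insert {u, w} F) V E"
    using sub assms(2,4,5) unfolding subgraph_def by auto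
  moreover have "simple_graph (insert w H) (insert {u, w} F)"
    using tree(1) assms(3,4) unfolding simple_graph_def
    by (metis finite_insert insert_iff)
  ultimately show ?thesis
    using acyclic_graph_insert_pendant[OF tree(3) sub(3) assms(3)]
      graph_connected_insert_pendant[OF tree(2) assms(4)]
    unfolding tree_in_def is_tree_def by blast
qed

lemma degree_insert_nonincident:
  assumes "v \<notin> e"
  shows "degree (insert e F) v = degree F v"
proof -
  have "{x \<in> insert e F. v \<in> x} = {x \<in> F. v \<in> x}"
    using assms by auto
  then show ?thesis
    unfolding degree_def by simp
qed

lemma degree_insert_incident:
  assumes "finite F" and "e \<notin> F" and "v \<in> e"
  shows "degree (insert e F) v = Suc (degree F v)"
proof -
  have "{x \<in> insert e F. v \<in> x} = insert e {x \<in> F. v \<in> x}"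
    using assms(3) by auto
  then show ?thesis
    unfolding degree_def using assms(1,2) by simp
qed

lemma graph_connected_degree_0:
  assumes "graph_connected H F" and "finite F" and "u \<in> H" and "degree F u = 0"
  shows "H = {u}"
proof (rule ccontr)
  assume "H \<noteq> {u}"
  then obtain v where "v \<in> H" "v \<noteq> u"
    using assms(3) by blast
  then have "(u, v) \<in> (adj_rel F)\<^sup>*"
    using assms(1,3) unfolding graph_connected_def by blast
  then obtain y where "(u, y) \<in> adj_rel F"
    using \<open>v \<noteq> u\<close> by (metis converse_rtranclE)
  then have "{u, y} \<in> F"
    unfolding adj_rel_def by simp
  then show False
    using assms(2,4) unfolding degree_def by auto
qed

(* The bound 2 is needed for the one-vertex tree, which has no leaves at all. *)
lemma card_leaves_insert_pendant:
  assumes "simple_graph H F" and "graph_connected H F" and "u \<in> H" and "w \<notin> H"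
  shows "card (leaves (insert w H) (insert {u, w} F)) \<le> max 2 (Suc (card (leaves H F)))"
proof (cases "degree F u = 0")
  case True
  then have "H = {u}"
    using graph_connected_degree_0[OF assms(2) simple_graph_finite_edges[OF assms(1)] assms(3)]
    by blast
  then have "leaves (insert w H) (insert {u, w} F) \<subseteq> {u, w}"
    unfolding leaves_def by auto
  then have "card (leaves (insert w H) (insert {u, w} F)) \<le> card {u, w}"
    by (rule card_mono[rotated]) simp
  also have "\<dots> \<le> 2"
    by (simp add: card_insert_if)
  finally show ?thesis
    by simp
next
  case False
  have "finite F"
    using simple_graph_finite_edges[OF assms(1)] .
  moreover have "{u, w} \<notin> F"
    using assms(4) simple_graph_edge_subset[OF assms(1)] by blast
  ultimately have "degree (insert {u, w} F) u \<noteq> 1"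
    using False degree_insert_incident[of F "{u, w}" u] by simp
  have "leaves (insert w H) (insert {u, w} F) \<subseteq> insert w (leaves H F)"
  proof
    fix v
    assume v: "v \<in> leaves (insert w H) (insert {u, w} F)"
    show "v \<in> insert w (leaves H F)"
    proof (cases "v = w")
      case False
      then have "v \<noteq> u"
        using v \<open>degree (insert {u, w} F) u \<noteq> 1\<close> unfolding leaves_def by auto
      then show ?thesis
        using v False degree_insert_nonincident[of v "{u, w}" F] unfolding leaves_def by auto
    qed simp
  qed
  moreover have fin: "finite (leaves H F)"
    using assms(1) unfolding simple_graph_def leaves_def by simp
  ultimately have "card (leaves (insert w H) (insert {u, w} F)) \<le> card (insert w (leaves H F))"
    by (simp add: card_mono)
  also have "\<dots> \<le> Suc (card (leaves H F))"
    using fin by (simp add: card_insert_if)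
  finally show ?thesis
    by simp
qed

lemma graph_connected_exit_edge:
  assumes "simple_graph V E" and "graph_connected V E"
    and "H \<subseteq> V" and "H \<noteq> {}" and "H \<noteq> V"
  obtains u w where "u \<in> H" "w \<in> V" "w \<notin> H" "{u, w} \<in> E"
proof -
  obtain x y where "x \<in> H" "y \<in> V" "y \<notin> H"
    using assms(3-5) by blast
  then have "(x, y) \<in> (adj_rel E)\<^sup>*"
    using assms(2,3) unfolding graph_connected_def by blast
  then obtain u w where "(u, w) \<in> adj_rel E" "u \<in> H" "w \<notin> H"
    using rtrancl_exit_step \<open>x \<in> H\<close> \<open>y \<notin> H\<close> by metis
  moreover from this have "{u, w} \<in> E"
    unfolding adj_rel_def by simp
  ultimately show ?thesis
    using that simple_graph_edge_subset[OF assms(1)] by blast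
qed

lemma tree_in_grows_to_Suc_leaves:
  assumes "simple_graph V E" and "graph_connected V E"
    and "\<not> (\<exists>F'. spanning_tree F' V E \<and> card (leaves V F') \<le> k)" and "2 \<le> k"
    and "tree_in H F V E" and "card (leaves H F) \<le> k"
  shows "\<exists>H' F'. tree_in H' F' V E \<and> card (leaves H' F') = Suc k \<and> H \<subset> H'"
  using assms(5,6)
proof (induction "card V - card H" arbitrary: H F rule: less_induct)
  case less
  have "H \<subseteq> V" "is_tree H F"
    using less.prems(1) unfolding tree_in_def subgraph_def by auto
  moreover have "H \<noteq> V"
    using less.prems assms(3) unfolding spanning_tree_def by blast
  moreover have "H \<noteq> {}"
    using \<open>is_tree H F\<close> unfolding is_tree_def graph_connected_def by blast
  ultimately obtain u w where uw: "u \<in> H" "w \<in> V" "w \<notin> H" "{u, w} \<in> E"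
    using graph_connected_exit_edge assms(1,2) by metis
  let ?H = "insert w H" and ?F = "insert {u, w} F"
  have tree: "tree_in ?H ?F V E"
    using tree_in_insert_pendant[OF less.prems(1) uw(2,3,1,4)] .
  have "card (leaves ?H ?F) \<le> Suc k"
    using card_leaves_insert_pendant[of H F u w] \<open>is_tree H F\<close> uw less.prems(2) assms(4)
    unfolding is_tree_def by simp
  then consider (grown) "card (leaves ?H ?F) = Suc k" | (fewer) "card (leaves ?H ?F) \<le> k"
    by linarith
  then show ?case
  proof cases
    case grown
    then show ?thesis
      using tree uw(3) by blast
  next
    case fewer
    have "finite V"
      using assms(1) unfolding simple_graph_def by simp
    then have "card ?H \<le> card V" and "card ?H = Suc (card H)"
      using \<open>H \<subseteq> V\<close> uw(2,3) by (auto intro: card_mono dest: finite_subset)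
    then have "card V - card ?H < card V - card H"
      by linarith
    then show ?thesis
      using less.hyps[OF _ tree fewer] by blast
  qed
qed

theorem lemma2p1:
  fixes V :: "'a set" and E :: "'a set set" and H :: "'a set" and F :: "'a set set"
  assumes "simple_graph V E"
    and "graph_connected V E"
    and "\<not> (\<exists>F'. spanning_tree F' V E \<and> card (leaves V F') \<le> 4)"
    and "maximal_tree_with_leaves 5 H F V E"
  shows "\<not> (\<exists>H' F'. tree_in H' F' V E \<and> card (leaves H' F') \<le> 4 \<and> H' = H)"
proof
  assume "\<exists>H' F'. tree_in H' F' V E \<and> card (leaves H' F') \<le> 4 \<and> H' = H"
  then obtain F' where "tree_in H F' V E" "card (leaves H F') \<le> 4"
    by blast
  then obtain H' F'' where H': "tree_in H' F'' V E" "card (leaves H' F'') = 5" "H \<subset> H'"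
    using tree_in_grows_to_Suc_leaves[OF assms(1-3)] by fastforce
  have "finite H'"
    using H'(1) assms(1) unfolding tree_in_def subgraph_def simple_graph_def
    by (meson finite_subset)
  then have "card H < card H'"
    using H'(3) by (rule psubset_card_mono)
  moreover have "card H' \<le> card H"
    using assms(4) H'(1,2) unfolding maximal_tree_with_leaves_def by blast
  ultimately show False
    by simp
qed

end
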